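(* Let $d\ge1$ and let $C$ be a $(d+1)$-dimensional copula which is $\mathrm{LTD}^1_{d+1}$. Let $(U_1,\ldots,U_d,V)\sim C$, fix $\boldsymbol\alpha=(\alpha_1,\ldots,\alpha_d)\in[0,1)^d$ with $C(\alpha_1,\ldots,\alpha_d,1)<1$, and let $A_{\boldsymbol U}=\{\exists\, i:U_i>\alpha_i\}$. Then $V\le_{\rm st}V\mid A_{\boldsymbol U}$.
   Context: A $(d+1)$-dimensional copula $C$ is $\mathrm{LTD}^1_{d+1}$ if, for $(U_1,\ldots,U_d,V)\sim C$, $P(U_1\le u_1,\ldots,U_d\le u_d\mid V\le v)$ is nonincreasing in $v\in(0,1]$ for all $u_1,\ldots,u_d$ (i.e. $C(u_1,\ldots,u_d,v)/v$ is nonincreasing in $v$). $V\mid A$ denotes a random variable with the conditional distribution of $V$ given $A$. $Z_1\le_{\rm st}Z_2$ means $P(Z_1>x)\le P(Z_2>x)$ for all $x$. *)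

theory Defs
  imports "HOL-Probability.Probability"
begin

text \<open>Coordinates U_1..U_d are indexed by i < d (i.e. 0..d-1).\<close>
definition copula_of ::
  "'a measure \<Rightarrow> nat \<Rightarrow> (nat \<Rightarrow> 'a \<Rightarrow> real) \<Rightarrow> ('a \<Rightarrow> real)
     \<Rightarrow> ((nat \<Rightarrow> real) \<Rightarrow> real \<Rightarrow> real) \<Rightarrow> bool" where
  "copula_of M d U V C \<longleftrightarrow>
     (\<forall>i<d. U i \<in> borel_measurable M \<and> distr M borel (U i) = uniform_measure lborel {0..1}) \<and>
     V \<in> borel_measurable M \<and> distr M borel V = uniform_measure lborel {0..1} \<and>
     (\<forall>u v. (\<forall>i<d. u i \<in> {0..1}) \<and> v \<in> {0..1} \<longrightarrow>
        C u v = measure M {\<omega> \<in> space M. (\<forall>i<d. U i \<omega> \<le> u i) \<and> V \<omega> \<le> v})"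

definition LTD1 :: "nat \<Rightarrow> ((nat \<Rightarrow> real) \<Rightarrow> real \<Rightarrow> real) \<Rightarrow> bool" where
  "LTD1 d C \<longleftrightarrow> (\<forall>u. (\<forall>i<d. u i \<in> {0..1}) \<longrightarrow>
      (\<forall>v1 v2. 0 < v1 \<and> v1 \<le> v2 \<and> v2 \<le> 1 \<longrightarrow> C u v2 / v2 \<le> C u v1 / v1))"

definition st_le :: "real measure \<Rightarrow> real measure \<Rightarrow> bool" where
  "st_le P Q \<longleftrightarrow> (\<forall>x. measure P {x<..} \<le> measure Q {x<..})"

end

theory Submission
  imports Defs
begin

text \<open>Let \<open>B = {U \<le> \<alpha>}\<close> be the complement of \<open>A\<^sub>U\<close>. The inequality
  \<open>P(V > x) \<le> P(V > x | A\<^sub>U)\<close> says that the events \<open>{V > x}\<close> and \<open>A\<^sub>U\<close> are positively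
  correlated, which is the same as positive correlation of their complements \<open>{V \<le> x}\<close> and \<open>B\<close>,
  i.e. \<open>x C(\<alpha>,1) \<le> C(\<alpha>,x)\<close>. This is the LTD condition comparing \<open>v = x\<close> with \<open>v = 1\<close>.\<close>

lemma measure_uniform_01_atMost:
  "measure (uniform_measure lborel {0..1::real}) {..x} = max 0 (min 1 x)"
proof -
  have "measure (uniform_measure lborel {0..1::real}) {..x} = measure lborel ({0..1} \<inter> {..x})"
    by simp
  also have "{0..1} \<inter> {..x} = {0..min 1 x}"
    by auto
  finally show ?thesis
    by simp
qed

lemma (in prob_space) prob_Int_eq_of_prob_eq_1:
  assumes "T \<in> events" "B \<in> events" "prob T = 1"
  shows "prob (T \<inter> B) = prob B"
proof -
  have "B - T \<subseteq> space M - T"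
    using assms(2) sets.sets_into_space by blast
  then have "prob (B - T) \<le> prob (space M - T)"
    using assms(1) by (intro finite_measure_mono) auto
  also have "\<dots> = 0"
    using assms prob_compl by simp
  finally have "prob (B - T) = 0"
    by (simp add: order_antisym)
  moreover have "prob B = prob (T \<inter> B) + prob (B - T)"
    using assms finite_measure_Diff'[of B T] by (simp add: Int_commute)
  ultimately show ?thesis
    by simp
qed

lemma (in prob_space) prob_compl_Int_compl_ge:
  assumes "T \<in> events" "B \<in> events" "prob T * prob B \<le> prob (T \<inter> B)"
  shows "prob (space M - T) * prob (space M - B) \<le> prob ((space M - T) \<inter> (space M - B))"
proof -
  have "prob ((space M - T) \<inter> (space M - B)) = prob (space M - (T \<union> B))"
    by (simp add: Diff_Un)
  also have "\<dots> = 1 - prob (T \<union> B)"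
    using assms by (simp add: prob_compl)
  also have "prob (T \<union> B) = prob T + prob B - prob (T \<inter> B)"
    using assms finite_measure_Union'[of T B] finite_measure_Diff'[of B T] by (simp add: Int_commute)
  finally show ?thesis
    using assms by (simp add: prob_compl algebra_simps)
qed

lemma (in prob_space) measure_distr_uniform_measure:
  assumes "A \<in> events" "prob A \<noteq> 0" "X \<in> borel_measurable M" "S \<in> sets borel"
  shows "measure (distr (uniform_measure M A) borel X) S = prob (A \<inter> (X -` S \<inter> space M)) / prob A"
  using assms by (simp add: measure_distr emeasure_eq_measure)

lemma (in prob_space) st_le_distr_uniform_measure_compl:
  assumes X: "X \<in> borel_measurable M" and B: "B \<in> events" "prob B \<noteq> 1"
    and correlated: "\<And>x. prob {\<omega> \<in> space M. X \<omega> \<le> x} * prob B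
                        \<le> prob ({\<omega> \<in> space M. X \<omega> \<le> x} \<inter> B)"
  shows "st_le (distr M borel X) (distr (uniform_measure M (space M - B)) borel X)"
  unfolding st_le_def
proof
  fix x :: real
  define A where "A = space M - B"
  define T where "T = {\<omega> \<in> space M. X \<omega> \<le> x}"
  have A: "A \<in> events" "prob A = 1 - prob B"
    unfolding A_def using B by (auto simp: prob_compl)
  have T: "T \<in> events"
    unfolding T_def using X by measurable
  have S: "X -` {x<..} \<inter> space M = space M - T"
    unfolding T_def by auto
  have "prob (space M - T) * prob A \<le> prob ((space M - T) \<inter> A)"
    unfolding A_def using T B(1) correlated[of x, folded T_def] by (rule prob_compl_Int_compl_ge)
  moreover have "0 < prob A"
    using A B prob_le_1[of B] by linarith
  ultimately have "prob (space M - T) \<le> prob (A \<inter> (space M - T)) / prob A"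
    by (simp add: le_divide_eq mult.commute Int_commute)
  moreover have "measure (distr M borel X) {x<..} = prob (space M - T)"
    using X by (simp add: measure_distr S)
  moreover have "measure (distr (uniform_measure M A) borel X) {x<..} = prob (A \<inter> (space M - T)) / prob A"
    using measure_distr_uniform_measure[OF A(1) _ X, of "{x<..}"] \<open>0 < prob A\<close> by (simp add: S)
  ultimately show "measure (distr M borel X) {x<..} \<le> measure (distr (uniform_measure M (space M - B)) borel X) {x<..}"
    unfolding A_def by simp
qed

lemma copula_ofD:
  assumes "copula_of M d U V C"
  shows copula_of_U_measurable: "\<And>i. i < d \<Longrightarrow> U i \<in> borel_measurable M"
    and copula_of_V_measurable: "V \<in> borel_measurable M"
    and copula_of_distr_V: "distr M borel V = uniform_measure lborel {0..1}"
    and copula_of_eq_measure: "\<And>u v. \<forall>i<d. u i \<in> {0..1} \<Longrightarrow> v \<in> {0..1} \<Longrightarrow>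
          C u v = measure M {\<omega> \<in> space M. (\<forall>i<d. U i \<omega> \<le> u i) \<and> V \<omega> \<le> v}"
  using assms unfolding copula_of_def by auto

lemma copula_of_lower_orthant_sets:
  assumes "copula_of M d U V C"
  shows "{\<omega> \<in> space M. \<forall>i<d. U i \<omega> \<le> u i} \<in> sets M"
proof (rule sets.sets_Collect_finite_All[where S = "{..<d}", unfolded Ball_def lessThan_iff])
  fix i assume "i < d"
  with assms have "U i \<in> borel_measurable M"
    by (rule copula_of_U_measurable)
  then show "{\<omega> \<in> space M. U i \<omega> \<le> u i} \<in> sets M"
    using borel_measurable_const by (rule borel_measurable_le)
qed (rule finite_lessThan)

lemma copula_of_V_atMost:
  assumes "copula_of M d U V C"
  shows "measure M {\<omega> \<in> space M. V \<omega> \<le> x} = max 0 (min 1 x)"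
proof -
  have "measure M {\<omega> \<in> space M. V \<omega> \<le> x} = measure (distr M borel V) {..x}"
    using copula_of_V_measurable[OF assms]
    by (subst measure_distr) (auto simp: vimage_def Int_def conj_commute)
  also have "\<dots> = max 0 (min 1 x)"
    unfolding copula_of_distr_V[OF assms] by (rule measure_uniform_01_atMost)
  finally show ?thesis .
qed

lemma copula_of_at_1:
  assumes "prob_space M" "copula_of M d U V C" "\<forall>i<d. u i \<in> {0..1}"
  shows "C u 1 = measure M {\<omega> \<in> space M. \<forall>i<d. U i \<omega> \<le> u i}"
proof -
  interpret prob_space M by fact
  have [measurable]: "V \<in> borel_measurable M"
    using assms(2) by (rule copula_of_V_measurable)
  have "C u 1 = prob {\<omega> \<in> space M. (\<forall>i<d. U i \<omega> \<le> u i) \<and> V \<omega> \<le> 1}"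
    using assms(2,3) by (rule copula_of_eq_measure) simp
  also have "{\<omega> \<in> space M. (\<forall>i<d. U i \<omega> \<le> u i) \<and> V \<omega> \<le> 1}
      = {\<omega> \<in> space M. V \<omega> \<le> 1} \<inter> {\<omega> \<in> space M. \<forall>i<d. U i \<omega> \<le> u i}"
    by blast
  also have "prob \<dots> = prob {\<omega> \<in> space M. \<forall>i<d. U i \<omega> \<le> u i}"
  proof (rule prob_Int_eq_of_prob_eq_1)
    show "{\<omega> \<in> space M. V \<omega> \<le> 1} \<in> events"
      by measurable
    show "{\<omega> \<in> space M. \<forall>i<d. U i \<omega> \<le> u i} \<in> events"
      using assms(2) by (rule copula_of_lower_orthant_sets)
    show "prob {\<omega> \<in> space M. V \<omega> \<le> 1} = 1"
      using copula_of_V_atMost[OF assms(2), of 1] by simp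
  qed
  finally show ?thesis .
qed

lemma LTD1_scaled_le:
  assumes "LTD1 d C" "\<forall>i<d. u i \<in> {0..1}" "0 < v" "v \<le> 1"
  shows "v * C u 1 \<le> C u v"
proof -
  have "C u 1 / 1 \<le> C u v / v"
    using assms unfolding LTD1_def by blast
  then show ?thesis
    using assms(3) by (simp add: field_simps)
qed

lemma LTD1_lower_orthant_correlated:
  fixes x :: real
  assumes "prob_space M" "copula_of M d U V C" "LTD1 d C" "\<forall>i<d. u i \<in> {0..1}"
  defines "T \<equiv> {\<omega> \<in> space M. V \<omega> \<le> x}" and "B \<equiv> {\<omega> \<in> space M. \<forall>i<d. U i \<omega> \<le> u i}"
  shows "measure M T * measure M B \<le> measure M (T \<inter> B)"
proof -
  interpret prob_space M by fact
  have [measurable]: "V \<in> borel_measurable M"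
    using assms(2) by (rule copula_of_V_measurable)
  have T: "T \<in> events"
    unfolding T_def by measurable
  have B: "B \<in> events"
    unfolding B_def using assms(2) by (rule copula_of_lower_orthant_sets)
  have prob_T: "prob T = max 0 (min 1 x)"
    unfolding T_def using assms(2) by (rule copula_of_V_atMost)
  have prob_B: "prob B = C u 1"
    unfolding B_def using assms(1,2,4) by (rule copula_of_at_1[symmetric])
  consider "x \<le> 0" | "0 < x" "x \<le> 1" | "1 < x"
    by linarith
  then show ?thesis
  proof cases
    case 1
    then have "prob T = 0"
      using prob_T by simp
    then show ?thesis
      by simp
  next
    case 2
    have "T \<inter> B = {\<omega> \<in> space M. (\<forall>i<d. U i \<omega> \<le> u i) \<and> V \<omega> \<le> x}"
      unfolding T_def B_def by blast
    then have "prob (T \<inter> B) = C u x"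
      using copula_of_eq_measure[OF assms(2,4), of x] 2 by simp
    moreover have "x * C u 1 \<le> C u x"
      using assms(3,4) 2 by (rule LTD1_scaled_le)
    moreover have "prob T = x"
      using prob_T 2 by simp
    ultimately show ?thesis
      using prob_B by simp
  next
    case 3
    then have "prob T = 1"
      using prob_T by simp
    then show ?thesis
      using prob_Int_eq_of_prob_eq_1[OF T B] by simp
  qed
qed

theorem lemmaB2:
  fixes M :: "'a measure" and d :: nat
    and U :: "nat \<Rightarrow> 'a \<Rightarrow> real" and V :: "'a \<Rightarrow> real"
    and C :: "(nat \<Rightarrow> real) \<Rightarrow> real \<Rightarrow> real" and \<alpha> :: "nat \<Rightarrow> real"
  assumes "prob_space M"
    and "d \<ge> 1"
    and "copula_of M d U V C"
    and "LTD1 d C"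
    and "\<forall>i<d. \<alpha> i \<in> {0..<1}"
    and "C \<alpha> 1 < 1"
  shows "st_le (distr M borel V)
           (distr (uniform_measure M {\<omega> \<in> space M. \<exists>i<d. U i \<omega> > \<alpha> i}) borel V)"
proof -
  interpret prob_space M by fact
  define B where "B = {\<omega> \<in> space M. \<forall>i<d. U i \<omega> \<le> \<alpha> i}"
  have \<alpha>: "\<forall>i<d. \<alpha> i \<in> {0..1}"
    using assms(5) by auto
  have B: "B \<in> events"
    unfolding B_def using assms(3) by (rule copula_of_lower_orthant_sets)
  have A_eq: "{\<omega> \<in> space M. \<exists>i<d. U i \<omega> > \<alpha> i} = space M - B"
    unfolding B_def by (auto simp: not_le)
  have "V \<in> borel_measurable M"
    using assms(3) by (rule copula_of_V_measurable)
  moreover have "prob B \<noteq> 1"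
    unfolding B_def using copula_of_at_1[OF assms(1,3) \<alpha>] assms(6) by simp
  moreover have "prob {\<omega> \<in> space M. V \<omega> \<le> x} * prob B \<le> prob ({\<omega> \<in> space M. V \<omega> \<le> x} \<inter> B)" for x
    unfolding B_def by (rule LTD1_lower_orthant_correlated[OF assms(1,3,4) \<alpha>])
  ultimately show ?thesis
    unfolding A_eq by (rule st_le_distr_uniform_measure_compl[OF _ B])
qed

end
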